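(* Let $N\ge 2$, $r(k)=N-1-k$ on $\{0,\dots,N-1\}$, and call a map $\mu$ on partial $N\times N$ arrays admissible if it has the following form: there is a permutation $\pi$ of $\{0,\dots,N-1\}$ with $\pi\circ r=r\circ\pi$ and $\pi(0)\in\{0,N-1\}$ and a $\rho\in\{\pi, r\circ\pi\}$ such that, for a partial array $A$ whose first row is a full permutation of $\{0,\dots,N-1\}$, $T(A)[\pi(i)][\rho(j)]=A[i][j]$ (cell $(\pi(i),\rho(j))$ filled iff $(i,j)$ filled) and $\mu(A)=\tau\circ T(A)$, where $\tau$ is the unique symbol permutation making the first row of $\tau\circ T(A)$ equal to $0,1,\dots,N-1$. Let $\sim$ be the equivalence relation on the set $\mathcal H_N$ of hourglass designs of order $N$ generated by $H\sim\mu(H)$ for admissible $\mu$. For $H\in\mathcal H_N$ let $n(H)$ be the number of normalized diagonal Latin squares of order $N$ agreeing with $H$ on all filled cells of $H$. Then for each $\sim$-class $C$, $n$ is constant on $C$, and the number of normalized diagonal Latin squares of order $N$ equals $\sum_{C} |C|\cdot n(H_C)$, where the sum runs over all $\sim$-classes $C$ of $\mathcal H_N$ and $H_C\in C$ is an arbitrary representative.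
   Context: A diagonal Latin square of order $N$ is an $N\times N$ array with entries in $\{0,\dots,N-1\}$ such that every row, every column, the main diagonal (cells $(i,i)$) and the main antidiagonal (cells $(i,N-1-i)$) each contain every element of $\{0,\dots,N-1\}$ exactly once; rows and columns are indexed $0,\dots,N-1$. It is normalized if its first row (row $0$) is $0,1,\dots,N-1$. A hourglass design of order $N$ is a partial $N\times N$ array in which exactly the cells of row $0$, row $N-1$, the main diagonal and the main antidiagonal are filled with symbols from $\{0,\dots,N-1\}$, the first row is $0,1,\dots,N-1$, and no symbol occurs twice among the filled cells of any row, any column, the main diagonal, or the main antidiagonal. *)

theory Defs
  imports Main "HOL-Combinatorics.Permutations"
begin

text \<open>Partial N x N arrays: cell (i,j) is filled with symbol s iff A (i,j) = Some s;
  cells outside {0..N-1} x {0..N-1} are required to be empty where relevant.\<close>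
type_synonym parr = "nat \<times> nat \<Rightarrow> nat option"

definition grid :: "nat \<Rightarrow> (nat \<times> nat) set" where
  "grid N = {(i,j). i < N \<and> j < N}"

definition diag_latin_square :: "nat \<Rightarrow> parr \<Rightarrow> bool" where
  "diag_latin_square N L \<longleftrightarrow>
     dom L = grid N \<and> ran L \<subseteq> {..<N} \<and>
     (\<forall>i<N. \<forall>s<N. card {j. j < N \<and> L (i,j) = Some s} = 1) \<and>
     (\<forall>j<N. \<forall>s<N. card {i. i < N \<and> L (i,j) = Some s} = 1) \<and>
     (\<forall>s<N. card {i. i < N \<and> L (i,i) = Some s} = 1) \<and>
     (\<forall>s<N. card {i. i < N \<and> L (i,N-1-i) = Some s} = 1)"

definition normalized :: "nat \<Rightarrow> parr \<Rightarrow> bool" where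
  "normalized N L \<longleftrightarrow> (\<forall>j<N. L (0,j) = Some j)"

definition hourglass_cells :: "nat \<Rightarrow> (nat \<times> nat) set" where
  "hourglass_cells N = {(i,j). i < N \<and> j < N \<and> (i = 0 \<or> i = N-1 \<or> j = i \<or> j = N-1-i)}"

definition hourglass :: "nat \<Rightarrow> parr \<Rightarrow> bool" where
  "hourglass N H \<longleftrightarrow>
     dom H = hourglass_cells N \<and> ran H \<subseteq> {..<N} \<and>
     (\<forall>j<N. H (0,j) = Some j) \<and>
     (\<forall>i<N. inj_on (\<lambda>j. H (i,j)) {j. j < N \<and> H (i,j) \<noteq> None}) \<and>
     (\<forall>j<N. inj_on (\<lambda>i. H (i,j)) {i. i < N \<and> H (i,j) \<noteq> None}) \<and>
     inj_on (\<lambda>i. H (i,i)) {i. i < N \<and> H (i,i) \<noteq> None} \<and>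
     inj_on (\<lambda>i. H (i,N-1-i)) {i. i < N \<and> H (i,N-1-i) \<noteq> None}"

definition hourglass_designs :: "nat \<Rightarrow> parr set" where
  "hourglass_designs N = {H. hourglass N H}"

definition ndls :: "nat \<Rightarrow> parr set" where
  "ndls N = {L. diag_latin_square N L \<and> normalized N L}"

definition agrees :: "parr \<Rightarrow> parr \<Rightarrow> bool" where
  "agrees H L \<longleftrightarrow> (\<forall>c. H c \<noteq> None \<longrightarrow> L c = H c)"

definition ncompl :: "nat \<Rightarrow> parr \<Rightarrow> nat" where
  "ncompl N H = card {L \<in> ndls N. agrees H L}"

definition refl_idx :: "nat \<Rightarrow> nat \<Rightarrow> nat" where
  "refl_idx N k = N - 1 - k"

definition admissible_pair :: "nat \<Rightarrow> (nat \<Rightarrow> nat) \<Rightarrow> (nat \<Rightarrow> nat) \<Rightarrow> bool" where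
  "admissible_pair N \<pi> \<rho> \<longleftrightarrow>
     \<pi> permutes {..<N} \<and>
     (\<forall>k<N. \<pi> (refl_idx N k) = refl_idx N (\<pi> k)) \<and>
     \<pi> 0 \<in> {0, N-1} \<and>
     ((\<forall>k<N. \<rho> k = \<pi> k) \<or> (\<forall>k<N. \<rho> k = refl_idx N (\<pi> k)))"

text \<open>T(A)[pi i][rho j] = A[i][j]\<close>
definition cell_transform :: "nat \<Rightarrow> (nat \<Rightarrow> nat) \<Rightarrow> (nat \<Rightarrow> nat) \<Rightarrow> parr \<Rightarrow> parr" where
  "cell_transform N \<pi> \<rho> A = (\<lambda>(a,b). if a < N \<and> b < N
      then A (inv_into {..<N} \<pi> a, inv_into {..<N} \<rho> b) else None)"

text \<open>tau: symbol s goes to the column index of s in the first row\<close>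
definition first_row_norm :: "nat \<Rightarrow> parr \<Rightarrow> nat \<Rightarrow> nat" where
  "first_row_norm N A s = (THE b. b < N \<and> A (0,b) = Some s)"

definition adm_map :: "nat \<Rightarrow> (nat \<Rightarrow> nat) \<Rightarrow> (nat \<Rightarrow> nat) \<Rightarrow> parr \<Rightarrow> parr" where
  "adm_map N \<pi> \<rho> A =
     (let B = cell_transform N \<pi> \<rho> A in (\<lambda>c. map_option (first_row_norm N B) (B c)))"

definition adm_step :: "nat \<Rightarrow> (parr \<times> parr) set" where
  "adm_step N = {(H, adm_map N \<pi> \<rho> H) | H \<pi> \<rho>.
      admissible_pair N \<pi> \<rho> \<and> H \<in> hourglass_designs N \<and> adm_map N \<pi> \<rho> H \<in> hourglass_designs N}"

definition hg_equiv :: "nat \<Rightarrow> (parr \<times> parr) set" where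
  "hg_equiv N = Restr ((adm_step N \<union> (adm_step N)\<inverse>)\<^sup>*) (hourglass_designs N)"

end

theory Submission
  imports Defs
begin

text \<open>An admissible map permutes the rows by \<open>\<pi>\<close> and the columns by \<open>\<rho>\<close>. This preserves the
  row and column conditions of a diagonal Latin square, and because \<open>\<pi>\<close> commutes with the
  reflection \<open>r\<close> and \<open>\<rho> \<in> {\<pi>, r \<circ> \<pi>}\<close>, the main diagonal and the antidiagonal are mapped
  onto themselves or onto each other. Since \<open>\<pi>(0) \<in> {0, N-1}\<close>, the new first row is an old first
  or last row, both of which are full in an hourglass design, so relabelling the symbols
  normalizes it again. The map commutes with agreement and has an admissible inverse, hence it
  is a bijection between the completions of \<open>H\<close> and of \<open>\<mu>(H)\<close>, and \<open>n\<close> is constant on classes.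
  Finally, every normalized diagonal Latin square agrees with exactly one hourglass design,
  its restriction to the hourglass cells, so the squares are counted by summing \<open>n\<close> over all
  hourglass designs, i.e. over the classes with multiplicity \<open>|C|\<close>.\<close>

section \<open>Admissible maps on arrays\<close>

text \<open>The cell \<open>(a, b)\<close> of the result takes the entry of the cell \<open>(P a, Q b)\<close>, so \<open>P\<close> and
  \<open>Q\<close> play the role of the inverses of \<open>\<pi>\<close> and \<open>\<rho>\<close>.\<close>

definition permute_cells :: "nat \<Rightarrow> (nat \<Rightarrow> nat) \<Rightarrow> (nat \<Rightarrow> nat) \<Rightarrow> parr \<Rightarrow> parr" where
  "permute_cells N P Q A = (\<lambda>(a,b). if a < N \<and> b < N then A (P a, Q b) else None)"

definition relabel :: "(nat \<Rightarrow> nat) \<Rightarrow> parr \<Rightarrow> parr" where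
  "relabel f A = (\<lambda>c. map_option f (A c))"

definition normalize_symbols :: "nat \<Rightarrow> parr \<Rightarrow> parr" where
  "normalize_symbols N B = relabel (first_row_norm N B) B"

definition transform :: "nat \<Rightarrow> (nat \<Rightarrow> nat) \<Rightarrow> (nat \<Rightarrow> nat) \<Rightarrow> parr \<Rightarrow> parr" where
  "transform N P Q A = normalize_symbols N (permute_cells N P Q A)"

lemma adm_map_eq_transform:
  "adm_map N \<pi> \<rho> = transform N (inv_into {..<N} \<pi>) (inv_into {..<N} \<rho>)"
  by (intro ext)
    (simp add: adm_map_def transform_def normalize_symbols_def relabel_def
      cell_transform_def permute_cells_def Let_def)

definition admissible_on :: "nat \<Rightarrow> (nat \<Rightarrow> nat) \<Rightarrow> (nat \<Rightarrow> nat) \<Rightarrow> bool" where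
  "admissible_on N P Q \<longleftrightarrow>
     bij_betw P {..<N} {..<N} \<and> bij_betw Q {..<N} {..<N} \<and> P 0 \<in> {0, N-1} \<and>
     (\<forall>i<N. P (N-1-i) = N-1-P i) \<and> ((\<forall>i<N. Q i = P i) \<or> (\<forall>i<N. Q i = N-1-P i))"

lemma bij_betw_reflect_lessThan: "bij_betw (\<lambda>k. N-1-k) {..<N::nat} {..<N}"
  by (rule bij_betw_byWitness[where f'="\<lambda>k. N-1-k"]) auto

lemma admissible_pair_imp_admissible_on:
  assumes "admissible_pair N \<pi> \<rho>"
  shows "admissible_on N \<pi> \<rho>"
proof -
  have bij: "bij_betw \<pi> {..<N} {..<N}"
    using assms permutes_imp_bij by (auto simp: admissible_pair_def)
  have "bij_betw \<rho> {..<N} {..<N}"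
  proof (cases "\<forall>k<N. \<rho> k = \<pi> k")
    case True
    then show ?thesis using bij by (subst bij_betw_cong[where g=\<pi>]) auto
  next
    case False
    then have "\<forall>k<N. \<rho> k = N-1-\<pi> k"
      using assms by (auto simp: admissible_pair_def refl_idx_def)
    moreover have "bij_betw ((\<lambda>k. N-1-k) \<circ> \<pi>) {..<N} {..<N}"
      using bij bij_betw_reflect_lessThan by (rule bij_betw_trans)
    ultimately show ?thesis
      by (metis (no_types, lifting) bij_betw_cong comp_apply lessThan_iff)
  qed
  with bij assms show ?thesis by (auto simp: admissible_pair_def admissible_on_def refl_idx_def)
qed

lemma admissible_on_inv_into:
  assumes adm: "admissible_on N P Q" and "0 < N"
  shows "admissible_on N (inv_into {..<N} P) (inv_into {..<N} Q)"
proof -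
  let ?P = "inv_into {..<N} P" and ?Q = "inv_into {..<N} Q"
  have bP: "bij_betw P {..<N} {..<N}" and bQ: "bij_betw Q {..<N} {..<N}"
    and refl: "\<forall>i<N. P (N-1-i) = N-1-P i" and P0: "P 0 \<in> {0, N-1}"
    and Q: "(\<forall>i<N. Q i = P i) \<or> (\<forall>i<N. Q i = N-1-P i)"
    using adm by (auto simp: admissible_on_def)
  have injP: "inj_on P {..<N}" and injQ: "inj_on Q {..<N}"
    using bP bQ by (auto simp: bij_betw_def)
  have P_lt: "?P i < N" and P_inv: "P (?P i) = i" if "i < N" for i
    using that bij_betwE[OF bij_betw_inv_into[OF bP]] bij_betw_inv_into_right[OF bP] by auto
  have "?P 0 \<in> {0, N-1}"
  proof (cases "P 0 = 0")
    case True
    then show ?thesis using inv_into_f_eq[OF injP] \<open>0 < N\<close> by auto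
  next
    case False
    then have "P (N-1) = 0" using P0 refl \<open>0 < N\<close> by (metis diff_zero insertE singletonD diff_self_eq_0)
    then show ?thesis using inv_into_f_eq[OF injP] \<open>0 < N\<close> by auto
  qed
  moreover have "?P (N-1-i) = N-1-?P i" if "i < N" for i
    using that refl P_lt P_inv by (intro inv_into_f_eq[OF injP]) auto
  moreover have "(\<forall>i<N. ?Q i = ?P i) \<or> (\<forall>i<N. ?Q i = N-1-?P i)"
    using Q
  proof
    assume "\<forall>i<N. Q i = P i"
    then show ?thesis using P_lt P_inv by (auto intro!: inv_into_f_eq[OF injQ])
  next
    assume QP: "\<forall>i<N. Q i = N-1-P i"
    have "Q (N-1-?P i) = i" if "i < N" for i
      using QP refl P_lt[OF that] P_inv[OF that] that by auto
    then show ?thesis using P_lt by (auto intro!: inv_into_f_eq[OF injQ])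
  qed
  ultimately show ?thesis
    using bij_betw_inv_into[OF bP] bij_betw_inv_into[OF bQ] by (simp add: admissible_on_def)
qed

lemma admissible_on_diagonals:
  assumes "admissible_on N P Q"
  shows "(\<forall>i<N. Q i = P i \<and> Q (N-1-i) = N-1-P i) \<or>
         (\<forall>i<N. Q i = N-1-P i \<and> Q (N-1-i) = P i)"
proof -
  have refl: "\<forall>i<N. P (N-1-i) = N-1-P i" and P_lt: "\<forall>i<N. P i < N"
    using assms by (auto simp: admissible_on_def dest: bij_betwE)
  from assms have "(\<forall>i<N. Q i = P i) \<or> (\<forall>i<N. Q i = N-1-P i)"
    by (simp add: admissible_on_def)
  then show ?thesis
  proof
    assume "\<forall>i<N. Q i = P i"
    then show ?thesis using refl by auto
  next
    assume "\<forall>i<N. Q i = N-1-P i"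
    then show ?thesis using refl P_lt by auto
  qed
qed

lemma card_lessThan_reindex:
  assumes "bij_betw \<sigma> {..<N} {..<N}"
  shows "card {x. x < N \<and> R (\<sigma> x)} = card {y. y < (N::nat) \<and> R y}"
proof -
  have "bij_betw \<sigma> {x \<in> {..<N}. R (\<sigma> x)} {y \<in> {..<N}. R y}"
    by (rule bij_betw_Collect[OF assms]) simp
  from bij_betw_same_card[OF this] show ?thesis by simp
qed

lemma permute_cells_apply:
  "a < N \<Longrightarrow> b < N \<Longrightarrow> permute_cells N P Q A (a,b) = A (P a, Q b)"
  by (simp add: permute_cells_def)

lemma diag_latin_square_permute_cells:
  assumes adm: "admissible_on N P Q" and L: "diag_latin_square N L"
  shows "diag_latin_square N (permute_cells N P Q L)"
proof -
  let ?M = "permute_cells N P Q L"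
  have bP: "bij_betw P {..<N} {..<N}" and bQ: "bij_betw Q {..<N} {..<N}"
    using adm by (auto simp: admissible_on_def)
  have P_lt: "P i < N" and Q_lt: "Q i < N" if "i < N" for i
    using that bij_betwE[OF bP] bij_betwE[OF bQ] by auto
  have domL: "dom L = grid N" and ranL: "ran L \<subseteq> {..<N}"
    and rows: "\<forall>i<N. \<forall>s<N. card {j. j < N \<and> L (i,j) = Some s} = 1"
    and cols: "\<forall>j<N. \<forall>s<N. card {i. i < N \<and> L (i,j) = Some s} = 1"
    and diag: "\<forall>s<N. card {i. i < N \<and> L (i,i) = Some s} = 1"
    and anti: "\<forall>s<N. card {i. i < N \<and> L (i,N-1-i) = Some s} = 1"
    using L by (auto simp: diag_latin_square_def)
  have L_some: "L (a,b) \<noteq> None" if "a < N" "b < N" for a b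
    using domL that by (auto simp: grid_def)
  have "dom ?M = grid N"
  proof (rule set_eqI)
    fix c :: "nat \<times> nat"
    obtain a b where c: "c = (a,b)" by fastforce
    show "c \<in> dom ?M \<longleftrightarrow> c \<in> grid N"
      using L_some P_lt Q_lt by (simp add: c domIff grid_def permute_cells_def)
  qed
  moreover have "ran ?M \<subseteq> {..<N}"
  proof
    fix s assume "s \<in> ran ?M"
    then obtain a b where "?M (a,b) = Some s" by (auto simp: ran_def)
    then have "L (P a, Q b) = Some s" by (simp add: permute_cells_def split: if_splits)
    then show "s \<in> {..<N}" using ranL by (auto intro: ranI)
  qed
  moreover have "card {j. j < N \<and> ?M (i,j) = Some s} = 1" if "i < N" "s < N" for i s
  proof -
    have "{j. j < N \<and> ?M (i,j) = Some s} = {j. j < N \<and> L (P i, Q j) = Some s}"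
      using that by (auto simp: permute_cells_apply)
    then show ?thesis
      using card_lessThan_reindex[OF bQ, of "\<lambda>j. L (P i, j) = Some s"] rows P_lt that by simp
  qed
  moreover have "card {i. i < N \<and> ?M (i,j) = Some s} = 1" if "j < N" "s < N" for j s
  proof -
    have "{i. i < N \<and> ?M (i,j) = Some s} = {i. i < N \<and> L (P i, Q j) = Some s}"
      using that by (auto simp: permute_cells_apply)
    then show ?thesis
      using card_lessThan_reindex[OF bP, of "\<lambda>i. L (i, Q j) = Some s"] cols Q_lt that by simp
  qed
  moreover have "card {i. i < N \<and> ?M (i,i) = Some s} = 1 \<and>
      card {i. i < N \<and> ?M (i,N-1-i) = Some s} = 1" if "s < N" for s
  proof -
    have diag': "{i. i < N \<and> ?M (i,i) = Some s} = {i. i < N \<and> L (P i, Q i) = Some s}"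
      and anti': "{i. i < N \<and> ?M (i,N-1-i) = Some s} = {i. i < N \<and> L (P i, Q (N-1-i)) = Some s}"
      by (auto simp: permute_cells_apply)
    have on_diag: "card {i. i < N \<and> L (P i, P i) = Some s} = 1"
      using card_lessThan_reindex[OF bP, of "\<lambda>y. L (y,y) = Some s"] diag that by simp
    have on_anti: "card {i. i < N \<and> L (P i, N-1-P i) = Some s} = 1"
      using card_lessThan_reindex[OF bP, of "\<lambda>y. L (y,N-1-y) = Some s"] anti that by simp
    from admissible_on_diagonals[OF adm] show ?thesis
    proof
      assume Q: "\<forall>i<N. Q i = P i \<and> Q (N-1-i) = N-1-P i"
      have "{i. i < N \<and> L (P i, Q i) = Some s} = {i. i < N \<and> L (P i, P i) = Some s}"
        and "{i. i < N \<and> L (P i, Q (N-1-i)) = Some s} = {i. i < N \<and> L (P i, N-1-P i) = Some s}"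
        using Q by auto
      then show ?thesis unfolding diag' anti' using on_diag on_anti by simp
    next
      assume Q: "\<forall>i<N. Q i = N-1-P i \<and> Q (N-1-i) = P i"
      have "{i. i < N \<and> L (P i, Q i) = Some s} = {i. i < N \<and> L (P i, N-1-P i) = Some s}"
        and "{i. i < N \<and> L (P i, Q (N-1-i)) = Some s} = {i. i < N \<and> L (P i, P i) = Some s}"
        using Q by auto
      then show ?thesis unfolding diag' anti' using on_diag on_anti by simp
    qed
  qed
  ultimately show ?thesis by (simp add: diag_latin_square_def)
qed

lemma relabel_eq_Some_iff:
  assumes "inj_on f {..<N}" "ran L \<subseteq> {..<N}" "t < N"
  shows "relabel f L c = Some (f t) \<longleftrightarrow> L c = Some t"
proof (cases "L c")
  case (Some x)
  then have "x < N" using assms(2) by (auto intro: ranI)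
  then show ?thesis using Some assms(1,3) by (auto simp: relabel_def inj_on_def)
qed (simp add: relabel_def)

lemma diag_latin_square_relabel:
  assumes f: "bij_betw f {..<N} {..<N}" and L: "diag_latin_square N L"
  shows "diag_latin_square N (relabel f L)"
proof -
  have domL: "dom L = grid N" and ranL: "ran L \<subseteq> {..<N}"
    and rows: "\<forall>i<N. \<forall>s<N. card {j. j < N \<and> L (i,j) = Some s} = 1"
    and cols: "\<forall>j<N. \<forall>s<N. card {i. i < N \<and> L (i,j) = Some s} = 1"
    and diag: "\<forall>s<N. card {i. i < N \<and> L (i,i) = Some s} = 1"
    and anti: "\<forall>s<N. card {i. i < N \<and> L (i,N-1-i) = Some s} = 1"
    using L by (auto simp: diag_latin_square_def)
  have inj: "inj_on f {..<N}" using f by (rule bij_betw_imp_inj_on)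
  have "ran (relabel f L) \<subseteq> {..<N}"
  proof
    fix s assume "s \<in> ran (relabel f L)"
    then obtain c t where "L c = Some t" "s = f t" by (auto simp: ran_def relabel_def)
    then show "s \<in> {..<N}" using ranL bij_betwE[OF f] by (auto intro: ranI)
  qed
  moreover have "dom (relabel f L) = grid N" using domL by (simp add: relabel_def dom_map_option)
  moreover have line: "card {x. x < N \<and> relabel f L (\<alpha> x) = Some s} = 1"
    if "s < N" and card: "\<forall>t<N. card {x. x < N \<and> L (\<alpha> x) = Some t} = 1" for \<alpha> s
  proof -
    have "s \<in> f ` {..<N}" using bij_betw_imp_surj_on[OF f] that by simp
    then obtain t where t: "t < N" "s = f t" by blast
    then have "{x. x < N \<and> relabel f L (\<alpha> x) = Some s} = {x. x < N \<and> L (\<alpha> x) = Some t}"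
      using relabel_eq_Some_iff[OF inj ranL] by simp
    then show ?thesis using card t(1) by simp
  qed
  moreover have "card {j. j < N \<and> relabel f L (i,j) = Some s} = 1" if "i < N" "s < N" for i s
    using line[of s "\<lambda>j. (i, j)"] rows that by simp
  moreover have "card {i. i < N \<and> relabel f L (i,j) = Some s} = 1" if "j < N" "s < N" for j s
    using line[of s "\<lambda>i. (i, j)"] cols that by simp
  moreover have "card {i. i < N \<and> relabel f L (i,i) = Some s} = 1" if "s < N" for s
    using line[of s "\<lambda>i. (i, i)"] diag that by simp
  moreover have "card {i. i < N \<and> relabel f L (i,N-1-i) = Some s} = 1" if "s < N" for s
    using line[of s "\<lambda>i. (i, N-1-i)"] anti that by simp
  ultimately show ?thesis by (simp add: diag_latin_square_def)
qed

section \<open>Normalizing the first row\<close>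

definition full_row :: "nat \<Rightarrow> parr \<Rightarrow> nat \<Rightarrow> bool" where
  "full_row N A i \<longleftrightarrow> (\<forall>c<N. \<exists>s<N. A (i,c) = Some s) \<and> inj_on (\<lambda>c. A (i,c)) {..<N}"

lemma first_row_norm_eq:
  assumes "inj_on (\<lambda>c. B (0,c)) {..<N}" "c < N" "B (0,c) = Some s"
  shows "first_row_norm N B s = c"
  unfolding first_row_norm_def
proof (rule the_equality)
  show "c < N \<and> B (0,c) = Some s" using assms(2,3) by simp
  show "b = c" if "b < N \<and> B (0,b) = Some s" for b
    using assms that by (auto simp: inj_on_def)
qed

lemma bij_betw_first_row_norm:
  assumes "full_row N B 0"
  shows "bij_betw (first_row_norm N B) {..<N} {..<N}"
proof -
  define h where "h c = the (B (0,c))" for c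
  have B0: "B (0,c) = Some (h c)" "h c < N" if "c < N" for c
    using assms that by (auto simp: full_row_def h_def)
  have inj_row: "inj_on (\<lambda>c. B (0,c)) {..<N}" using assms by (simp add: full_row_def)
  then have "inj_on h {..<N}" using B0 by (simp add: inj_on_def)
  moreover have "h ` {..<N} \<subseteq> {..<N}" using B0 by auto
  ultimately have bij_h: "bij_betw h {..<N} {..<N}"
    by (simp add: bij_betw_def endo_inj_surj)
  have "first_row_norm N B s = inv_into {..<N} h s" if "s < N" for s
  proof -
    have "s \<in> h ` {..<N}" using bij_betw_imp_surj_on[OF bij_h] \<open>s < N\<close> by simp
    then obtain c where "c < N" "s = h c" by blast
    then show ?thesis
      using first_row_norm_eq[OF inj_row] B0 bij_betw_inv_into_left[OF bij_h] by simp
  qed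
  then show ?thesis
    using bij_betw_inv_into[OF bij_h] by (subst bij_betw_cong[where g="inv_into {..<N} h"]) auto
qed

lemma normalized_normalize_symbols:
  assumes "full_row N B 0"
  shows "normalized N (normalize_symbols N B)"
proof -
  have "normalize_symbols N B (0,j) = Some j" if j: "j < N" for j
  proof -
    obtain s where "B (0,j) = Some s" using assms j unfolding full_row_def by blast
    then show ?thesis
      using first_row_norm_eq[of B N j s] assms j
      by (simp add: full_row_def normalize_symbols_def relabel_def)
  qed
  then show ?thesis by (simp add: normalized_def)
qed

lemma full_row_permute_cells:
  assumes "bij_betw Q {..<N} {..<N}" "full_row N A (P 0)"
  shows "full_row N (permute_cells N P Q A) 0"
proof -
  have row: "permute_cells N P Q A (0,c) = A (P 0, Q c)" if "c < N" for c
    using that by (simp add: permute_cells_apply)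
  have "inj_on (\<lambda>c. A (P 0, Q c)) {..<N}"
    using assms comp_inj_on[of Q "{..<N}" "\<lambda>b. A (P 0, b)"]
    by (simp add: full_row_def bij_betw_def comp_def)
  then have "inj_on (\<lambda>c. permute_cells N P Q A (0,c)) {..<N}"
    using row inj_on_cong[of "{..<N}" "\<lambda>c. permute_cells N P Q A (0,c)"] by simp
  then show ?thesis
    using assms bij_betwE[OF assms(1)] row by (simp add: full_row_def)
qed

lemma card_Collect_eq_1_unique:
  "card {x. x < (N::nat) \<and> R x} = 1 \<Longrightarrow> a < N \<Longrightarrow> R a \<Longrightarrow> b < N \<Longrightarrow> R b \<Longrightarrow> a = b"
  by (metis (mono_tags, lifting) card_1_singletonE mem_Collect_eq singletonD)

lemma diag_latin_square_full_row:
  assumes L: "diag_latin_square N L" and "i < N"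
  shows "full_row N L i"
proof -
  have domL: "dom L = grid N" and ranL: "ran L \<subseteq> {..<N}"
    and rows: "\<forall>s<N. card {j. j < N \<and> L (i,j) = Some s} = 1"
    using L \<open>i < N\<close> by (auto simp: diag_latin_square_def)
  have filled: "\<exists>s<N. L (i,c) = Some s" if c: "c < N" for c
  proof -
    have "(i,c) \<in> dom L" using domL \<open>i < N\<close> c by (simp add: grid_def)
    then obtain s where "L (i,c) = Some s" by blast
    with ranL show ?thesis by (auto intro: ranI)
  qed
  moreover have "inj_on (\<lambda>c. L (i,c)) {..<N}"
  proof (rule inj_onI)
    fix x y assume "x \<in> {..<N}" "y \<in> {..<N}" "L (i,x) = L (i,y)"
    moreover obtain s where "s < N" "L (i,x) = Some s" using filled \<open>x \<in> {..<N}\<close> by auto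
    ultimately show "x = y"
      using card_Collect_eq_1_unique[of N "\<lambda>j. L (i,j) = Some s"] rows by auto
  qed
  ultimately show ?thesis by (simp add: full_row_def)
qed

text \<open>What admissible maps need of hourglass designs and normalized diagonal Latin squares
  alike: an admissible map moves row \<open>0\<close> or row \<open>N-1\<close> to the top, and both must be full.\<close>

definition framed :: "nat \<Rightarrow> parr \<Rightarrow> bool" where
  "framed N A \<longleftrightarrow> dom A \<subseteq> grid N \<and> ran A \<subseteq> {..<N} \<and> (\<forall>j<N. A (0,j) = Some j) \<and> full_row N A (N-1)"

lemma framed_full_row:
  assumes "framed N A" "i \<in> {0, N-1}"
  shows "full_row N A i"
  using assms by (auto simp: framed_def full_row_def inj_on_def)

lemma hourglass_framed:
  assumes "hourglass N H"
  shows "framed N H"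
proof -
  have domH: "dom H = hourglass_cells N" and ranH: "ran H \<subseteq> {..<N}"
    and row0: "\<forall>j<N. H (0,j) = Some j"
    and rows: "\<forall>i<N. inj_on (\<lambda>j. H (i,j)) {j. j < N \<and> H (i,j) \<noteq> None}"
    using assms by (auto simp: hourglass_def)
  have filled: "\<exists>s<N. H (N-1,c) = Some s" if c: "c < N" for c
  proof -
    have "(N-1,c) \<in> dom H" using domH c by (simp add: hourglass_cells_def)
    then obtain s where "H (N-1,c) = Some s" by blast
    with ranH show ?thesis by (auto intro: ranI)
  qed
  then have "{j. j < N \<and> H (N-1,j) \<noteq> None} = {..<N}" by auto
  then have "inj_on (\<lambda>j. H (N-1,j)) {..<N}"
    using rows[rule_format, of "N-1"] by (cases "N = 0") simp_all
  then have "full_row N H (N-1)" using filled by (simp add: full_row_def)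
  moreover have "dom H \<subseteq> grid N" using domH by (auto simp: hourglass_cells_def grid_def)
  ultimately show ?thesis using ranH row0 by (simp add: framed_def)
qed

lemma ndls_framed:
  assumes "L \<in> ndls N"
  shows "framed N L"
proof -
  have "full_row N L (N-1)"
    using assms diag_latin_square_full_row[of N L "N-1"]
    by (cases "N = 0") (simp_all add: ndls_def full_row_def)
  then show ?thesis using assms by (simp add: framed_def ndls_def diag_latin_square_def normalized_def)
qed

lemma transform_ndls:
  assumes adm: "admissible_on N P Q" and L: "L \<in> ndls N"
  shows "transform N P Q L \<in> ndls N"
proof -
  let ?B = "permute_cells N P Q L"
  have "full_row N L (P 0)"
    using adm framed_full_row[OF ndls_framed[OF L]] by (simp add: admissible_on_def)
  then have row: "full_row N ?B 0"
    using adm full_row_permute_cells by (simp add: admissible_on_def)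
  have "diag_latin_square N ?B"
    using diag_latin_square_permute_cells[OF adm] L by (simp add: ndls_def)
  then have "diag_latin_square N (transform N P Q L)"
    using diag_latin_square_relabel bij_betw_first_row_norm[OF row]
    by (simp add: transform_def normalize_symbols_def)
  moreover have "normalized N (transform N P Q L)"
    using normalized_normalize_symbols[OF row] by (simp add: transform_def)
  ultimately show ?thesis by (simp add: ndls_def)
qed

section \<open>Admissible maps permute completions\<close>

lemma agrees_permute_cells:
  "agrees H L \<Longrightarrow> agrees (permute_cells N P Q H) (permute_cells N P Q L)"
  by (auto simp: agrees_def permute_cells_def)

lemma agrees_relabel: "agrees H L \<Longrightarrow> agrees (relabel f H) (relabel f L)"
  by (auto simp: agrees_def relabel_def)

lemma first_row_norm_agrees:
  assumes "full_row N H 0" "agrees H L"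
  shows "first_row_norm N L = first_row_norm N H"
proof -
  have "L (0,b) = H (0,b)" if "b < N" for b
    using assms that by (force simp: full_row_def agrees_def)
  then show ?thesis by (intro ext) (simp add: first_row_norm_def cong: conj_cong)
qed

lemma agrees_transform:
  assumes adm: "admissible_on N P Q" and H: "framed N H" and "agrees H L"
  shows "agrees (transform N P Q H) (transform N P Q L)"
proof -
  let ?H = "permute_cells N P Q H" and ?L = "permute_cells N P Q L"
  have "agrees ?H ?L" using \<open>agrees H L\<close> by (rule agrees_permute_cells)
  moreover have "full_row N ?H 0"
    using adm framed_full_row[OF H] full_row_permute_cells by (simp add: admissible_on_def)
  ultimately show ?thesis
    using first_row_norm_agrees agrees_relabel by (simp add: transform_def normalize_symbols_def)
qed

lemma permute_cells_relabel:
  "permute_cells N P Q (relabel f A) = relabel f (permute_cells N P Q A)"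
  by (auto simp: permute_cells_def relabel_def)

lemma permute_cells_left_inverse:
  assumes "dom A \<subseteq> grid N" "\<forall>a<N. P' a < N \<and> P (P' a) = a" "\<forall>b<N. Q' b < N \<and> Q (Q' b) = b"
  shows "permute_cells N P' Q' (permute_cells N P Q A) = A"
proof
  fix c :: "nat \<times> nat"
  obtain a b where c: "c = (a,b)" by fastforce
  show "permute_cells N P' Q' (permute_cells N P Q A) c = A c"
  proof (cases "a < N \<and> b < N")
    case False
    then have "c \<notin> dom A" using assms(1) c by (auto simp: grid_def)
    then show ?thesis using False c by (auto simp: permute_cells_def)
  qed (use assms c in \<open>simp add: permute_cells_def\<close>)
qed

lemma normalize_symbols_relabel:
  assumes inj: "inj_on f {..<N}" and ran: "ran A \<subseteq> {..<N}" and row0: "\<forall>j<N. A (0,j) = Some j"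
  shows "normalize_symbols N (relabel f A) = A"
proof
  fix c
  have "inj_on (\<lambda>j. relabel f A (0,j)) {..<N}"
    using inj row0 by (simp add: inj_on_def relabel_def)
  then have norm: "first_row_norm N (relabel f A) (f x) = x" if "x < N" for x
    using first_row_norm_eq row0 that by (simp add: relabel_def)
  show "normalize_symbols N (relabel f A) c = A c"
  proof (cases "A c")
    case (Some x)
    then have "x < N" using ran by (auto intro: ranI)
    then show ?thesis using Some norm by (simp add: normalize_symbols_def relabel_def)
  qed (simp add: normalize_symbols_def relabel_def)
qed

lemma transform_left_inverse:
  assumes adm: "admissible_on N P Q" and A: "framed N A"
    and "\<forall>a<N. P' a < N \<and> P (P' a) = a" "\<forall>b<N. Q' b < N \<and> Q (Q' b) = b"
  shows "transform N P' Q' (transform N P Q A) = A"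
proof -
  let ?f = "first_row_norm N (permute_cells N P Q A)"
  have "full_row N (permute_cells N P Q A) 0"
    using adm framed_full_row[OF A] full_row_permute_cells by (simp add: admissible_on_def)
  then have inj: "inj_on ?f {..<N}" using bij_betw_first_row_norm bij_betw_imp_inj_on by blast
  have "transform N P' Q' (transform N P Q A) = normalize_symbols N (relabel ?f A)"
    using A assms(3,4)
    by (simp add: transform_def normalize_symbols_def[of N "permute_cells N P Q A"]
        permute_cells_relabel permute_cells_left_inverse framed_def)
  also have "\<dots> = A"
    using normalize_symbols_relabel[OF inj] A by (simp add: framed_def)
  finally show ?thesis .
qed

lemma ncompl_transform:
  assumes adm: "admissible_on N P Q" and "0 < N"
    and H: "hourglass N H" and H': "hourglass N (transform N P Q H)"
  shows "ncompl N (transform N P Q H) = ncompl N H"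
proof -
  let ?P' = "inv_into {..<N} P" and ?Q' = "inv_into {..<N} Q"
  let ?H' = "transform N P Q H"
  have adm': "admissible_on N ?P' ?Q'" using adm \<open>0 < N\<close> by (rule admissible_on_inv_into)
  have bP: "bij_betw P {..<N} {..<N}" and bQ: "bij_betw Q {..<N} {..<N}"
    using adm by (auto simp: admissible_on_def)
  have inv: "\<forall>a<N. ?P' a < N \<and> P (?P' a) = a" "\<forall>b<N. ?Q' b < N \<and> Q (?Q' b) = b"
    using bij_betwE[OF bij_betw_inv_into[OF bP]] bij_betwE[OF bij_betw_inv_into[OF bQ]]
      bij_betw_inv_into_right[OF bP] bij_betw_inv_into_right[OF bQ] by auto
  have inv': "\<forall>a<N. P a < N \<and> ?P' (P a) = a" "\<forall>b<N. Q b < N \<and> ?Q' (Q b) = b"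
    using bij_betwE[OF bP] bij_betwE[OF bQ]
      bij_betw_inv_into_left[OF bP] bij_betw_inv_into_left[OF bQ] by auto
  have H_back: "transform N ?P' ?Q' ?H' = H"
    using transform_left_inverse[OF adm hourglass_framed[OF H] inv] .
  have "bij_betw (transform N P Q) {L \<in> ndls N. agrees H L} {L \<in> ndls N. agrees ?H' L}"
  proof (rule bij_betw_byWitness[where f'="transform N ?P' ?Q'"])
    show "\<forall>L\<in>{L \<in> ndls N. agrees H L}. transform N ?P' ?Q' (transform N P Q L) = L"
      using transform_left_inverse[OF adm ndls_framed inv] by blast
    show "\<forall>L\<in>{L \<in> ndls N. agrees ?H' L}. transform N P Q (transform N ?P' ?Q' L) = L"
      using transform_left_inverse[OF adm' ndls_framed inv'] by blast
    show "transform N P Q ` {L \<in> ndls N. agrees H L} \<subseteq> {L \<in> ndls N. agrees ?H' L}"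
      using transform_ndls[OF adm] agrees_transform[OF adm hourglass_framed[OF H]] by auto
    show "transform N ?P' ?Q' ` {L \<in> ndls N. agrees ?H' L} \<subseteq> {L \<in> ndls N. agrees H L}"
      using transform_ndls[OF adm'] agrees_transform[OF adm' hourglass_framed[OF H']] H_back by auto
  qed
  then show ?thesis unfolding ncompl_def by (rule bij_betw_same_card[symmetric])
qed

lemma ncompl_adm_step:
  assumes "(H, H') \<in> adm_step N" "0 < N"
  shows "ncompl N H' = ncompl N H"
proof -
  obtain \<pi> \<rho> where H': "H' = adm_map N \<pi> \<rho> H" and adm: "admissible_pair N \<pi> \<rho>"
    and "hourglass N H" "hourglass N H'"
    using assms(1) by (auto simp: adm_step_def hourglass_designs_def)
  moreover have "admissible_on N (inv_into {..<N} \<pi>) (inv_into {..<N} \<rho>)"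
    using admissible_pair_imp_admissible_on[OF adm] \<open>0 < N\<close> by (rule admissible_on_inv_into)
  ultimately show ?thesis using ncompl_transform \<open>0 < N\<close> by (simp add: adm_map_eq_transform)
qed

lemma equiv_hg_equiv: "equiv (hourglass_designs N) (hg_equiv N)"
proof (rule equivI)
  let ?R = "(adm_step N \<union> (adm_step N)\<inverse>)\<^sup>*"
  have "sym ?R" by (intro sym_rtrancl sym_Un_converse)
  then show "sym (hg_equiv N)" by (simp add: hg_equiv_def sym_def)
qed (auto simp: hg_equiv_def refl_on_def intro: trans_Restr trans_rtrancl)

lemma ncompl_hg_equiv:
  assumes "(H, H') \<in> hg_equiv N" "0 < N"
  shows "ncompl N H = ncompl N H'"
proof -
  have "(H, H') \<in> (adm_step N \<union> (adm_step N)\<inverse>)\<^sup>*"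
    using assms(1) by (simp add: hg_equiv_def)
  then show ?thesis
  proof (induction rule: rtrancl_induct)
    case (step H' H'')
    then show ?case using ncompl_adm_step[OF _ \<open>0 < N\<close>] by auto
  qed simp
qed

section \<open>Counting by hourglass designs\<close>

definition hourglass_part :: "nat \<Rightarrow> parr \<Rightarrow> parr" where
  "hourglass_part N L = (\<lambda>c. if c \<in> hourglass_cells N then L c else None)"

lemma hourglass_hourglass_part:
  assumes "L \<in> ndls N"
  shows "hourglass N (hourglass_part N L)"
proof -
  let ?H = "hourglass_part N L"
  have domL: "dom L = grid N" and ranL: "ran L \<subseteq> {..<N}"
    and rows: "\<forall>i<N. \<forall>s<N. card {j. j < N \<and> L (i,j) = Some s} = 1"
    and cols: "\<forall>j<N. \<forall>s<N. card {i. i < N \<and> L (i,j) = Some s} = 1"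
    and diag: "\<forall>s<N. card {i. i < N \<and> L (i,i) = Some s} = 1"
    and anti: "\<forall>s<N. card {i. i < N \<and> L (i,N-1-i) = Some s} = 1"
    and row0: "\<forall>j<N. L (0,j) = Some j"
    using assms by (auto simp: ndls_def diag_latin_square_def normalized_def)
  have H_L: "?H c = L c" if "?H c \<noteq> None" for c
    using that by (simp add: hourglass_part_def split: if_splits)
  have "hourglass_cells N \<subseteq> dom L"
    using domL by (auto simp: hourglass_cells_def grid_def)
  then have "dom ?H = hourglass_cells N"
    by (auto simp: hourglass_part_def domIff split: if_splits)
  moreover have "ran ?H \<subseteq> {..<N}"
    using ranL by (auto simp: hourglass_part_def ran_def)
  moreover have "\<forall>j<N. ?H (0,j) = Some j"
    using row0 by (simp add: hourglass_part_def hourglass_cells_def)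
  moreover have line: "inj_on (\<lambda>x. ?H (\<alpha> x)) {x. x < N \<and> ?H (\<alpha> x) \<noteq> None}"
    if card: "\<forall>s<N. card {x. x < N \<and> L (\<alpha> x) = Some s} = 1" for \<alpha>
  proof (rule inj_onI)
    fix x y assume x: "x \<in> {x. x < N \<and> ?H (\<alpha> x) \<noteq> None}"
      and y: "y \<in> {x. x < N \<and> ?H (\<alpha> x) \<noteq> None}" and eq: "?H (\<alpha> x) = ?H (\<alpha> y)"
    obtain s where s: "?H (\<alpha> x) = Some s" using x by auto
    then have "L (\<alpha> x) = Some s" "L (\<alpha> y) = Some s" using H_L eq by (metis option.distinct(1))+
    moreover have "s < N" using ranL \<open>L (\<alpha> x) = Some s\<close> by (auto intro: ranI)
    ultimately show "x = y"
      using card_Collect_eq_1_unique[of N "\<lambda>x. L (\<alpha> x) = Some s"] card x y by auto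
  qed
  moreover have "inj_on (\<lambda>j. ?H (i,j)) {j. j < N \<and> ?H (i,j) \<noteq> None}" if "i < N" for i
    using line[of "\<lambda>j. (i,j)"] rows that by simp
  moreover have "inj_on (\<lambda>i. ?H (i,j)) {i. i < N \<and> ?H (i,j) \<noteq> None}" if "j < N" for j
    using line[of "\<lambda>i. (i,j)"] cols that by simp
  moreover have "inj_on (\<lambda>i. ?H (i,i)) {i. i < N \<and> ?H (i,i) \<noteq> None}"
    using line[of "\<lambda>i. (i,i)"] diag by simp
  moreover have "inj_on (\<lambda>i. ?H (i,N-1-i)) {i. i < N \<and> ?H (i,N-1-i) \<noteq> None}"
    using line[of "\<lambda>i. (i,N-1-i)"] anti by simp
  ultimately show ?thesis by (simp add: hourglass_def)
qed

lemma agrees_iff_eq_hourglass_part: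
  assumes "hourglass N H"
  shows "agrees H L \<longleftrightarrow> hourglass_part N L = H"
proof -
  have "dom H = hourglass_cells N" using assms by (simp add: hourglass_def)
  then have cells: "H c \<noteq> None \<longleftrightarrow> c \<in> hourglass_cells N" for c by blast
  then have outside: "H c = None" if "c \<notin> hourglass_cells N" for c using that by blast
  show ?thesis
  proof
    assume "agrees H L"
    then show "hourglass_part N L = H"
      using cells outside by (auto simp: agrees_def hourglass_part_def fun_eq_iff)
  next
    assume "hourglass_part N L = H"
    then show "agrees H L" by (auto simp: agrees_def hourglass_part_def split: if_splits)
  qed
qed

lemma finite_grid: "finite (grid N)"
  by (rule finite_subset[of _ "{..<N} \<times> {..<N}"]) (auto simp: grid_def)

lemma finite_hourglass_designs: "finite (hourglass_designs N)"
proof (rule finite_subset)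
  show "hourglass_designs N \<subseteq> {m. dom m = hourglass_cells N \<and> ran m \<subseteq> {..<N}}"
    by (auto simp: hourglass_designs_def hourglass_def)
  have "hourglass_cells N \<subseteq> grid N" by (auto simp: hourglass_cells_def grid_def)
  then show "finite {m. dom m = hourglass_cells N \<and> ran m \<subseteq> {..<N}}"
    using finite_grid by (intro finite_set_of_finite_maps) (auto intro: finite_subset)
qed

lemma finite_ndls: "finite (ndls N)"
proof (rule finite_subset)
  show "ndls N \<subseteq> {m. dom m = grid N \<and> ran m \<subseteq> {..<N}}"
    by (auto simp: ndls_def diag_latin_square_def)
  show "finite {m. dom m = grid N \<and> ran m \<subseteq> {..<N}}"
    by (intro finite_set_of_finite_maps finite_grid) simp
qed

lemma card_ndls_eq_sum_ncompl: "card (ndls N) = (\<Sum>H\<in>hourglass_designs N. ncompl N H)"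
proof -
  have "hourglass_part N ` ndls N \<subseteq> hourglass_designs N"
    using hourglass_hourglass_part by (auto simp: hourglass_designs_def)
  from sum.group[OF finite_ndls finite_hourglass_designs this, of "\<lambda>_. 1::nat"]
  have "card (ndls N) = (\<Sum>H\<in>hourglass_designs N. card {L \<in> ndls N. hourglass_part N L = H})"
    by simp
  also have "\<dots> = (\<Sum>H\<in>hourglass_designs N. ncompl N H)"
    unfolding ncompl_def hourglass_designs_def
    by (intro sum.cong) (auto simp: agrees_iff_eq_hourglass_part)
  finally show ?thesis .
qed

lemma sum_quotient_card_mult:
  fixes f :: "'a \<Rightarrow> nat"
  assumes eqv: "equiv A E" and "finite A" and rep: "\<And>C. C \<in> A // E \<Longrightarrow> rep C \<in> C"
    and f: "\<And>x y. (x, y) \<in> E \<Longrightarrow> f x = f y"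
  shows "(\<Sum>C\<in>A // E. card C * f (rep C)) = sum f A"
proof -
  have "card C * f (rep C) = sum f C" if C: "C \<in> A // E" for C
  proof -
    have "f x = f (rep C)" if "x \<in> C" for x
      using in_quotient_imp_in_rel[OF eqv C] rep[OF C] that f by blast
    then show ?thesis by simp
  qed
  then have "(\<Sum>C\<in>A // E. card C * f (rep C)) = (\<Sum>C\<in>A // E. sum f C)" by simp
  also have "\<dots> = sum f (\<Union>(A // E))"
  proof -
    have "\<forall>C\<in>A // E. finite C"
      using \<open>finite A\<close> in_quotient_imp_subset[OF eqv] finite_subset by blast
    moreover have "\<forall>C\<in>A // E. \<forall>D\<in>A // E. C \<noteq> D \<longrightarrow> C \<inter> D = {}"
      using quotient_disj[OF eqv] by blast
    ultimately show ?thesis by (simp add: sum.Union_disjoint)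
  qed
  also have "\<dots> = sum f A" by (simp add: Union_quotient[OF eqv])
  finally show ?thesis .
qed

theorem corollary1:
  fixes N :: nat
  assumes "N \<ge> 2"
  shows "(\<forall>C \<in> hourglass_designs N // hg_equiv N. \<forall>H \<in> C. \<forall>H' \<in> C.
            ncompl N H = ncompl N H') \<and>
         (\<forall>rep. (\<forall>C \<in> hourglass_designs N // hg_equiv N. rep C \<in> C) \<longrightarrow>
            card (ndls N) =
              (\<Sum>C \<in> hourglass_designs N // hg_equiv N. card C * ncompl N (rep C)))"
proof (intro conjI ballI allI impI)
  have "0 < N" using assms by simp
  note eqv = equiv_hg_equiv[of N]
  show "ncompl N H = ncompl N H'" if "C \<in> hourglass_designs N // hg_equiv N" "H \<in> C" "H' \<in> C"
    for C H H'
    using in_quotient_imp_in_rel[OF eqv that(1)] that(2,3) ncompl_hg_equiv \<open>0 < N\<close> by blast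
  show "card (ndls N) = (\<Sum>C \<in> hourglass_designs N // hg_equiv N. card C * ncompl N (rep C))"
    if "\<forall>C \<in> hourglass_designs N // hg_equiv N. rep C \<in> C" for rep
    using sum_quotient_card_mult[OF eqv finite_hourglass_designs] that ncompl_hg_equiv \<open>0 < N\<close>
      card_ndls_eq_sum_ncompl by simp
qed

end
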